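(* Let $\mathbf S$ be a complete semilattice. Then the set $\Gamma$ of all non-generators of $\mathbf S$ is a complete subsemilattice of $\mathbf S$, and $\Gamma$ equals the intersection of all maximal proper complete subsemilattices of $\mathbf S$ (this intersection being $S$ itself if there are no maximal proper complete subsemilattices).
   Context: A complete semilattice is a partially ordered set $S$ in which every subset, including the empty set, has a meet (infimum) $\bigwedge$; in particular $S$ has a maximum. A complete subsemilattice of $\mathbf S$ is a subset $T\subseteq S$ such that for every $Y\subseteq T$ (including $Y=\emptyset$, so $T$ contains the maximum of $S$) the meet $\bigwedge Y$ computed in $S$ lies in $T$. For $X\subseteq S$, $\langle X\rangle$ denotes the complete subsemilattice generated by $X$, i.e. the intersection of all complete subsemilattices containing $X$, and $\langle X,a\rangle=\langle X\cup\{a\}\rangle$. An element $a\in S$ is a non-generator if for every $X\subseteq S$, $\langle X,a\rangle=S$ implies $\langle X\rangle=S$; otherwise $a$ is a relative generator. A maximal proper complete subsemilattice is a complete subsemilattice $T\neq S$ not properly contained in any complete subsemilattice other than $S$. *)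

theory Defs
  imports Main
begin

text \<open>The complete semilattice S is the whole carrier of a type of class complete_lattice
  (a poset with all meets, including the empty meet, is a complete lattice); the meet is Inf.\<close>

definition complete_subsemilattice :: "'a::complete_lattice set \<Rightarrow> bool" where
  "complete_subsemilattice T \<longleftrightarrow> (\<forall>Y. Y \<subseteq> T \<longrightarrow> Inf Y \<in> T)"

definition generated :: "'a::complete_lattice set \<Rightarrow> 'a set" where
  "generated X = \<Inter> {T. complete_subsemilattice T \<and> X \<subseteq> T}"

definition non_generator :: "'a::complete_lattice \<Rightarrow> bool" where
  "non_generator a \<longleftrightarrow>
     (\<forall>X. generated (X \<union> {a}) = UNIV \<longrightarrow> generated X = UNIV)"

definition maximal_proper_csub :: "'a::complete_lattice set \<Rightarrow> bool" where
  "maximal_proper_csub T \<longleftrightarrow> complete_subsemilattice T \<and> T \<noteq> UNIV \<and>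
     (\<forall>U. complete_subsemilattice U \<and> T \<subseteq> U \<longrightarrow> U = T \<or> U = UNIV)"

end

theory Submission
  imports Defs
begin

text \<open>The non-generators are exactly the elements that are not completely meet-irreducible,
  i.e. the \<open>a\<close> with \<open>a = Inf {y. a < y}\<close>; these are closed under meets, since \<open>Inf Y\<close>
  either lies in \<open>Y\<close> or is the meet of elements strictly above it. For a completely
  meet-irreducible \<open>a\<close> the complement \<open>- {a}\<close> is a complete subsemilattice, necessarily maximal
  proper, which witnesses both that \<open>a\<close> is a relative generator and that \<open>a\<close> is not in the
  intersection. Conversely, if \<open>a = Inf {y. a < y}\<close> and \<open>X \<union> {a}\<close> generates, then the
  complete subsemilattice \<open>{x. a < x \<longrightarrow> x \<in> generated X}\<close> contains \<open>X \<union> {a}\<close>, so every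
  \<open>y > a\<close> and hence their meet \<open>a\<close> lies in \<open>generated X\<close>.\<close>

definition completely_meet_irreducible :: "'a::complete_lattice \<Rightarrow> bool" where
  "completely_meet_irreducible a \<longleftrightarrow> Inf {y. a < y} \<noteq> a"

lemma complete_subsemilattice_generated: "complete_subsemilattice (generated X)"
  unfolding generated_def complete_subsemilattice_def by (auto simp: subset_eq)

lemma subset_generated: "X \<subseteq> generated X"
  unfolding generated_def by auto

lemma generated_least: "complete_subsemilattice T \<Longrightarrow> X \<subseteq> T \<Longrightarrow> generated X \<subseteq> T"
  unfolding generated_def by auto

lemma complete_subsemilattice_Compl_singleton_iff:
  "complete_subsemilattice (- {a}) \<longleftrightarrow> completely_meet_irreducible a"
proof
  assume "complete_subsemilattice (- {a})"
  moreover have "{y. a < y} \<subseteq> - {a}" by auto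
  ultimately show "completely_meet_irreducible a"
    unfolding complete_subsemilattice_def completely_meet_irreducible_def by blast
next
  assume irr: "completely_meet_irreducible a"
  show "complete_subsemilattice (- {a})"
    unfolding complete_subsemilattice_def
  proof (intro allI impI)
    fix Y assume Y: "Y \<subseteq> - {a}"
    show "Inf Y \<in> - {a}"
    proof
      assume "Inf Y \<in> {a}"
      with Y have "Y \<subseteq> {y. a < y}"
        using Inf_lower by (fastforce simp: order.strict_iff_order)
      then have "Inf {y. a < y} \<le> Inf Y" by (rule Inf_superset_mono)
      moreover have "a \<le> Inf {y. a < y}" by (auto intro: Inf_greatest)
      ultimately show False
        using irr \<open>Inf Y \<in> {a}\<close> unfolding completely_meet_irreducible_def by simp
    qed
  qed
qed

lemma maximal_proper_csub_Compl_singleton: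
  assumes "completely_meet_irreducible a"
  shows "maximal_proper_csub (- {a})"
proof -
  have "U = - {a} \<or> U = UNIV" if "- {a} \<subseteq> U" for U :: "'a set"
    using that by (cases "a \<in> U") auto
  then show ?thesis
    using assms complete_subsemilattice_Compl_singleton_iff
    unfolding maximal_proper_csub_def by auto
qed

lemma complete_subsemilattice_above_restrict:
  assumes "complete_subsemilattice T"
  shows "complete_subsemilattice {x. a < x \<longrightarrow> x \<in> T}"
  unfolding complete_subsemilattice_def
proof (intro allI impI CollectI)
  fix Y assume "Y \<subseteq> {x. a < x \<longrightarrow> x \<in> T}" and "a < Inf Y"
  then have "Y \<subseteq> T"
    using Inf_lower less_le_trans by blast
  with assms show "Inf Y \<in> T" unfolding complete_subsemilattice_def by blast
qed

lemma non_generator_iff_not_completely_meet_irreducible: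
  "non_generator a \<longleftrightarrow> \<not> completely_meet_irreducible a"
proof
  assume ng: "non_generator a"
  show "\<not> completely_meet_irreducible a"
  proof
    assume "completely_meet_irreducible a"
    then have "generated (- {a}) \<subseteq> - {a}"
      by (intro generated_least) (simp_all add: complete_subsemilattice_Compl_singleton_iff)
    moreover have "- {a} \<union> {a} = UNIV" by blast
    then have "generated (- {a} \<union> {a}) = UNIV"
      using subset_generated[of UNIV] by (metis subset_UNIV subset_antisym)
    with ng have "generated (- {a}) = UNIV"
      unfolding non_generator_def by blast
    ultimately show False by auto
  qed
next
  assume red: "\<not> completely_meet_irreducible a"
  show "non_generator a"
    unfolding non_generator_def
  proof (intro allI impI)
    fix X assume gen: "generated (X \<union> {a}) = UNIV"
    let ?T = "generated X"
    have "complete_subsemilattice {x. a < x \<longrightarrow> x \<in> ?T}"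
      by (rule complete_subsemilattice_above_restrict[OF complete_subsemilattice_generated])
    moreover have "X \<union> {a} \<subseteq> {x. a < x \<longrightarrow> x \<in> ?T}"
      using subset_generated[of X] by auto
    ultimately have "generated (X \<union> {a}) \<subseteq> {x. a < x \<longrightarrow> x \<in> ?T}"
      by (rule generated_least)
    with gen have "{y. a < y} \<subseteq> ?T" by blast
    then have "Inf {y. a < y} \<in> ?T"
      using complete_subsemilattice_generated unfolding complete_subsemilattice_def by blast
    with red have "X \<union> {a} \<subseteq> ?T"
      using subset_generated[of X] unfolding completely_meet_irreducible_def by simp
    then have "generated (X \<union> {a}) \<subseteq> ?T"
      by (rule generated_least[OF complete_subsemilattice_generated])
    with gen show "?T = UNIV" by auto
  qed
qed

lemma complete_subsemilattice_not_completely_meet_irreducible: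
  "complete_subsemilattice {a::'a::complete_lattice. \<not> completely_meet_irreducible a}"
  unfolding complete_subsemilattice_def
proof (intro allI impI)
  fix Y :: "'a set" assume Y: "Y \<subseteq> {a. \<not> completely_meet_irreducible a}"
  show "Inf Y \<in> {a. \<not> completely_meet_irreducible a}"
  proof (cases "Inf Y \<in> Y")
    case False
    then have "Y \<subseteq> {y. Inf Y < y}"
      using Inf_lower by (fastforce simp: order.strict_iff_order)
    then have "Inf {y. Inf Y < y} \<le> Inf Y" by (rule Inf_superset_mono)
    moreover have "Inf Y \<le> Inf {y. Inf Y < y}" by (auto intro: Inf_greatest)
    ultimately show ?thesis
      unfolding completely_meet_irreducible_def by simp
  qed (use Y in auto)
qed

lemma non_generator_in_maximal_proper_csub:
  assumes "non_generator a" and T: "maximal_proper_csub T"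
  shows "a \<in> T"
proof (rule ccontr)
  assume "a \<notin> T"
  have "T \<subseteq> generated (T \<union> {a})" "a \<in> generated (T \<union> {a})"
    using subset_generated[of "T \<union> {a}"] by auto
  with T \<open>a \<notin> T\<close> have "generated (T \<union> {a}) = UNIV"
    using complete_subsemilattice_generated unfolding maximal_proper_csub_def by blast
  with assms(1) have "generated T = UNIV"
    unfolding non_generator_def by simp
  moreover have "generated T \<subseteq> T"
    using T unfolding maximal_proper_csub_def by (intro generated_least) simp_all
  ultimately show False
    using T unfolding maximal_proper_csub_def by auto
qed

theorem proposition1:
  shows "complete_subsemilattice {a::'a::complete_lattice. non_generator a} \<and>
         {a::'a. non_generator a} = \<Inter> {T. maximal_proper_csub T}"
proof
  show "complete_subsemilattice {a::'a::complete_lattice. non_generator a}"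
    using complete_subsemilattice_not_completely_meet_irreducible
    by (simp add: non_generator_iff_not_completely_meet_irreducible)
  have "\<Inter> {T. maximal_proper_csub T} \<subseteq> {a::'a. non_generator a}"
  proof
    fix a :: 'a assume a: "a \<in> \<Inter> {T. maximal_proper_csub T}"
    have "\<not> completely_meet_irreducible a"
      using a maximal_proper_csub_Compl_singleton by blast
    then show "a \<in> {a. non_generator a}"
      by (simp add: non_generator_iff_not_completely_meet_irreducible)
  qed
  then show "{a::'a. non_generator a} = \<Inter> {T. maximal_proper_csub T}"
    using non_generator_in_maximal_proper_csub by blast
qed

end
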